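(* Define $\mathrm{Mex}(F)=\min(\mathbb{N}_0\setminus F)$ for $F\subseteq\mathbb{N}_0$, and $a+D=\{a+d:d\in D\}$. Define triples $v(n)=(v_1(n),v_2(n),v_3(n))$, $n\ge 0$, recursively by $v(0)=(0,0,0)$ and, for $n\ge 0$, with $F_n=\{v_i(k): 0\le k\le n,\ i\in\{1,2,3\}\}$ and $D_n=\bigcup_{k=0}^{n}\{v_2(k)-v_1(k),\,v_3(k)-v_2(k),\,v_3(k)-v_1(k)\}$, \[ v_1(n+1)=\mathrm{Mex}(F_n),\quad v_2(n+1)=\mathrm{Mex}\big((v_1(n+1)+D_n)\cup\{1,\dots,v_1(n+1)\}\cup F_n\big), \] \[ v_3(n+1)=\mathrm{Mex}\big((v_2(n+1)+D_n)\cup\{1,\dots,v_2(n+1)\}\cup F_n\big). \] Then for all $i,j\in\{1,2,3\}$ with $i>j$ and all $n\ge 0$, \[ v_i(n+1)-v_j(n+1)-\big(v_i(n)-v_j(n)\big)\ge i-j. \]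
   Context: $\mathbb{N}_0$ denotes the nonnegative integers. *)

theory Defs
  imports Main
begin

definition Mex :: "int set \<Rightarrow> int" where
  "Mex F = int (LEAST x::nat. int x \<notin> F)"

definition shift :: "int \<Rightarrow> int set \<Rightarrow> int set" where
  "shift a D = {a + d | d. d \<in> D}"

text \<open>F_n and D_n computed from the list of triples v(0),...,v(n).\<close>
definition Fset :: "(int \<times> int \<times> int) list \<Rightarrow> int set" where
  "Fset xs = (\<Union>(a,b,c)\<in>set xs. {a, b, c})"

definition Dset :: "(int \<times> int \<times> int) list \<Rightarrow> int set" where
  "Dset xs = (\<Union>(a,b,c)\<in>set xs. {b - a, c - b, c - a})"

definition step :: "(int \<times> int \<times> int) list \<Rightarrow> int \<times> int \<times> int" where
  "step xs = (let F = Fset xs; D = Dset xs;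
                  a = Mex F;
                  b = Mex (shift a D \<union> {1..a} \<union> F);
                  c = Mex (shift b D \<union> {1..b} \<union> F)
              in (a, b, c))"

text \<open>vs n = [v(0), ..., v(n)]\<close>
fun vs :: "nat \<Rightarrow> (int \<times> int \<times> int) list" where
  "vs 0 = [(0, 0, 0)]"
| "vs (Suc n) = vs n @ [step (vs n)]"

definition v :: "nat \<Rightarrow> int \<times> int \<times> int" where
  "v n = vs n ! n"

definition vc :: "nat \<Rightarrow> nat \<Rightarrow> int" where
  "vc i n = (if i = 1 then fst (v n) else if i = 2 then fst (snd (v n)) else snd (snd (v n)))"

end

theory Submission
  imports Defs
begin

text \<open>Write \<open>a = Mex F\<^sub>n\<close> and \<open>m = Mex D\<^sub>n\<close>. By induction, \<open>v\<^sub>1\<close>, \<open>v\<^sub>2 - v\<^sub>1\<close> and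
  \<open>v\<^sub>3 - v\<^sub>2\<close> are strictly increasing and all gaps \<open>v\<^sub>2(k) - v\<^sub>1(k)\<close>, \<open>v\<^sub>3(k) - v\<^sub>2(k)\<close>,
  \<open>k \<le> n\<close>, lie below \<open>m\<close>. Since \<open>D\<^sub>n\<close> contains \<open>[0, m)\<close>, the next triple is
  \<open>(a, a + e, a + e + m)\<close>, where \<open>e \<ge> m\<close> is the first offset with \<open>e \<notin> D\<^sub>n\<close> and
  \<open>a + e \<notin> F\<^sub>n\<close>; the new gaps \<open>e\<close> and \<open>m\<close> therefore exceed all old ones, which gives growth
  \<open>\<ge> 1\<close> for \<open>v\<^sub>2 - v\<^sub>1\<close>, \<open>v\<^sub>3 - v\<^sub>2\<close> and \<open>\<ge> 2\<close> for \<open>v\<^sub>3 - v\<^sub>1\<close>. To keep the invariant one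
  needs \<open>[0, e] \<subseteq> D\<^sub>n\<^sub>+\<^sub>1\<close>: the monotonicity makes the large elements of \<open>F\<^sub>n\<close> (third
  components) \<open>3\<close> apart and those of \<open>D\<^sub>n\<close> (differences \<open>v\<^sub>3 - v\<^sub>1\<close>) \<open>2\<close> apart, which forces
  \<open>e \<le> m + 2\<close> with every offset strictly between \<open>m\<close> and \<open>e\<close> in \<open>D\<^sub>n\<close>.\<close>

lemma Mex_eqI:
  assumes "0 \<le> x" "x \<notin> S" "\<And>y. 0 \<le> y \<Longrightarrow> y < x \<Longrightarrow> y \<in> S"
  shows "Mex S = x"
proof -
  have "(LEAST t::nat. int t \<notin> S) = nat x"
  proof (rule Least_equality)
    show "int (nat x) \<notin> S" using assms by simp
  next
    fix t :: nat assume "int t \<notin> S"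
    then show "nat x \<le> t" using assms(3)[of "int t"] by linarith
  qed
  then show ?thesis unfolding Mex_def using assms by simp
qed

lemma Mex_nonneg: "0 \<le> Mex S"
  unfolding Mex_def by simp

lemma Mex_le: "0 \<le> x \<Longrightarrow> x \<notin> S \<Longrightarrow> Mex S \<le> x"
  unfolding Mex_def using Least_le[of "\<lambda>t. int t \<notin> S" "nat x"] by simp

lemma less_Mex_imp_mem: "0 \<le> y \<Longrightarrow> y < Mex S \<Longrightarrow> y \<in> S"
  unfolding Mex_def using not_less_Least[of "nat y" "\<lambda>t. int t \<notin> S"] by simp

lemma Mex_notin:
  assumes "finite S"
  shows "Mex S \<notin> S"
proof -
  have "finite (int -` S)"
    using assms by (rule finite_vimageI) (simp add: inj_on_def)
  then obtain t :: nat where "int t \<notin> S"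
    using ex_new_if_finite[OF infinite_UNIV_nat] by blast
  then show ?thesis unfolding Mex_def by (rule LeastI)
qed

lemma less_MexI:
  "finite S \<Longrightarrow> 0 \<le> x \<Longrightarrow> (\<And>y. 0 \<le> y \<Longrightarrow> y \<le> x \<Longrightarrow> y \<in> S) \<Longrightarrow> x < Mex S"
  using Mex_notin[of S] Mex_nonneg[of S] by force

lemma Mex_mono: "S \<subseteq> T \<Longrightarrow> finite T \<Longrightarrow> Mex S \<le> Mex T"
  using Mex_le[OF Mex_nonneg, of T S] Mex_notin[of T] by auto

lemma mem_shift_iff: "x \<in> shift a D \<longleftrightarrow> x - a \<in> D"
  unfolding shift_def by force

lemma Mex_shift_Un_eq:
  assumes "0 \<in> F" "0 \<le> b" "0 < e" "e \<notin> D" "b + e \<notin> F"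
    and covered: "\<And>y. 0 < y \<Longrightarrow> y < e \<Longrightarrow> y \<in> D \<or> b + y \<in> F"
  shows "Mex (shift b D \<union> {1..b} \<union> F) = b + e"
proof (rule Mex_eqI)
  show "0 \<le> b + e" "b + e \<notin> shift b D \<union> {1..b} \<union> F"
    using assms by (auto simp: mem_shift_iff)
next
  fix y assume "0 \<le> y" "y < b + e"
  then consider "y = 0" | "0 < y" "y \<le> b" | "0 < y - b" "y - b < e" by linarith
  then show "y \<in> shift b D \<union> {1..b} \<union> F"
    by cases (use assms(1) covered[of "y - b"] in \<open>auto simp: mem_shift_iff\<close>)
qed

lemma obtain_gap:
  fixes a c m :: int
  assumes F_sep: "\<And>x y. x \<in> F \<Longrightarrow> y \<in> F \<Longrightarrow> c < x \<Longrightarrow> x < y \<Longrightarrow> x + 3 \<le> y"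
    and D_sep: "\<And>x y. x \<in> D \<Longrightarrow> y \<in> D \<Longrightarrow> m \<le> x \<Longrightarrow> x < y \<Longrightarrow> x + 2 \<le> y"
    and "c < a + m" "m \<notin> D"
  obtains e where "m \<le> e" "e \<notin> D" "a + e \<notin> F" "m < e \<Longrightarrow> a + m \<in> F"
    "\<And>y. m < y \<Longrightarrow> y < e \<Longrightarrow> y \<in> D"
proof (cases "a + m \<in> F")
  case False
  show ?thesis by (rule that[of m]) (use False \<open>m \<notin> D\<close> in auto)
next
  case True
  have far: "a + m + k \<notin> F" if "0 < k" "k < 3" for k
    using F_sep[OF True, of "a + m + k"] that \<open>c < a + m\<close> by auto
  show ?thesis
  proof (cases "m + 1 \<in> D")
    case False
    then show ?thesis using that[of "m + 1"] True far[of 1] by (auto simp: add.assoc)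
  next
    case m1: True
    have "m + 2 \<notin> D" using D_sep[OF m1, of "m + 2"] by auto
    moreover have "y \<in> D" if "m < y" "y < m + 2" for y
      using that m1 by (cases "y = m + 1") auto
    ultimately show ?thesis using that[of "m + 2"] True far[of 2] by (auto simp: add.assoc)
  qed
qed

lemma strict_mono_on_atMost_SucI:
  fixes f :: "nat \<Rightarrow> 'a::linorder"
  assumes "strict_mono_on {..n} f" "f n < f (Suc n)"
  shows "strict_mono_on {..Suc n} f"
proof (rule strict_mono_onI)
  fix r s assume "r \<in> {..Suc n}" "s \<in> {..Suc n}" "r < s"
  then consider "s \<le> n" | "r \<le> n" "s = Suc n" by fastforce
  then show "f r < f s"
  proof cases
    case 1
    then show ?thesis using strict_mono_onD[OF assms(1)] \<open>r < s\<close> by simp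
  next
    case 2
    then show ?thesis using strict_mono_on_leD[OF assms(1), of r n] assms(2) by simp
  qed
qed

definition v1 :: "nat \<Rightarrow> int" where "v1 n = fst (v n)"
definition v2 :: "nat \<Rightarrow> int" where "v2 n = fst (snd (v n))"
definition v3 :: "nat \<Rightarrow> int" where "v3 n = snd (snd (v n))"

lemma length_vs: "length (vs n) = Suc n"
  by (induction n) auto

lemma nth_vs: "k \<le> n \<Longrightarrow> vs n ! k = v k"
proof (induction n)
  case 0
  then show ?case by (simp add: v_def)
next
  case (Suc n)
  then show ?case
    by (cases "k = Suc n") (auto simp: v_def nth_append length_vs)
qed

lemma set_vs: "set (vs n) = v ` {..n}"
  by (auto simp: set_conv_nth length_vs nth_vs less_Suc_eq_le) (metis nth_vs)

lemma vc_0: "v1 0 = 0" "v2 0 = 0" "v3 0 = 0"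
  by (simp_all add: v1_def v2_def v3_def v_def)

lemma vc_Suc:
  "v1 (Suc n) = Mex (Fset (vs n))"
  "v2 (Suc n) = Mex (shift (v1 (Suc n)) (Dset (vs n)) \<union> {1..v1 (Suc n)} \<union> Fset (vs n))"
  "v3 (Suc n) = Mex (shift (v2 (Suc n)) (Dset (vs n)) \<union> {1..v2 (Suc n)} \<union> Fset (vs n))"
  by (simp_all add: v1_def v2_def v3_def v_def nth_append length_vs step_def Let_def)

lemma mem_Fset_vs: "x \<in> Fset (vs n) \<longleftrightarrow> (\<exists>k\<le>n. x = v1 k \<or> x = v2 k \<or> x = v3 k)"
  by (force simp: Fset_def set_vs v1_def v2_def v3_def)

lemma mem_Dset_vs:
  "x \<in> Dset (vs n) \<longleftrightarrow> (\<exists>k\<le>n. x = v2 k - v1 k \<or> x = v3 k - v2 k \<or> x = v3 k - v1 k)"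
  by (force simp: Dset_def set_vs v1_def v2_def v3_def)

lemma Dset_vs_Suc:
  "Dset (vs (Suc n)) = Dset (vs n) \<union>
     {v2 (Suc n) - v1 (Suc n), v3 (Suc n) - v2 (Suc n), v3 (Suc n) - v1 (Suc n)}"
  by (auto simp: mem_Dset_vs le_Suc_eq simp del: vs.simps)

lemma finite_Fset: "finite (Fset xs)"
  by (auto simp: Fset_def)

lemma finite_Dset: "finite (Dset xs)"
  by (auto simp: Dset_def)

lemma zero_mem_Fset_vs: "0 \<in> Fset (vs n)"
  using vc_0 by (auto simp: mem_Fset_vs)

lemma Mex_Dset_vs_pos: "0 < Mex (Dset (vs n))"
proof -
  have "0 \<in> Dset (vs n)" using vc_0 by (auto simp: mem_Dset_vs)
  then show ?thesis using Mex_notin[OF finite_Dset] Mex_nonneg by (metis order_le_less)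
qed

lemma v1_less_Mex_Fset: "v1 n < Mex (Fset (vs n))"
proof (cases n)
  case 0
  have "Mex (Fset (vs 0)) = 1" by (rule Mex_eqI) (auto simp: Fset_def)
  then show ?thesis using 0 vc_0 by simp
next
  case (Suc p)
  have "Fset (vs p) \<subseteq> Fset (vs n)" using Suc by (auto simp: Fset_def)
  then have "v1 n \<le> Mex (Fset (vs n))" using Suc vc_Suc(1) Mex_mono finite_Fset by simp
  moreover have "v1 n \<in> Fset (vs n)" by (auto simp: mem_Fset_vs)
  ultimately show ?thesis using Mex_notin[OF finite_Fset] order_le_less by metis
qed

definition regular_upto :: "nat \<Rightarrow> bool" where
  "regular_upto n \<longleftrightarrow>
     strict_mono_on {..n} v1 \<and> strict_mono_on {..n} (\<lambda>k. v2 k - v1 k) \<and>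
     strict_mono_on {..n} (\<lambda>k. v3 k - v2 k) \<and>
     v2 n - v1 n < Mex (Dset (vs n)) \<and> v3 n - v2 n < Mex (Dset (vs n))"

lemma regular_upto_0: "regular_upto 0"
proof -
  have "Mex (Dset (vs 0)) = 1" by (rule Mex_eqI) (auto simp: Dset_def)
  then show ?thesis by (auto simp: regular_upto_def strict_mono_on_def vc_0)
qed

context
  fixes n :: nat
  assumes regular: "regular_upto n"
begin

lemma regular_upto_less:
  assumes "k < l" "l \<le> n"
  shows "v1 k < v1 l \<and> v2 k - v1 k < v2 l - v1 l \<and> v3 k - v2 k < v3 l - v2 l"
proof -
  have "k \<in> {..n}" "l \<in> {..n}" using assms by auto
  with regular show ?thesis
    unfolding regular_upto_def by (blast dest: strict_mono_onD[OF _ _ _ \<open>k < l\<close>])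
qed

lemma regular_upto_le:
  "k \<le> l \<Longrightarrow> l \<le> n \<Longrightarrow> v1 k \<le> v1 l \<and> v2 k \<le> v2 l \<and> v3 k \<le> v3 l"
  using regular_upto_less[of k l] by (cases "k = l") auto

lemma regular_upto_ordered: "k \<le> n \<Longrightarrow> 0 \<le> v1 k \<and> v1 k \<le> v2 k \<and> v2 k \<le> v3 k"
  using regular_upto_less[of 0 k] vc_0 by (cases "k = 0") auto

lemma regular_upto_gaps_less_Mex:
  "k \<le> n \<Longrightarrow> v2 k - v1 k < Mex (Dset (vs n)) \<and> v3 k - v2 k < Mex (Dset (vs n))"
  using regular regular_upto_less[of k n] unfolding regular_upto_def by (cases "k = n") auto

lemma regular_upto_sep:
  "k < l \<Longrightarrow> l \<le> n \<Longrightarrow> v3 k + 3 \<le> v3 l \<and> v3 k - v1 k + 2 \<le> v3 l - v1 l"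
  using regular_upto_less[of k l] by linarith

lemma Fset_le_v3: "x \<in> Fset (vs n) \<Longrightarrow> x \<le> v3 n"
  using regular_upto_ordered regular_upto_le by (fastforce simp: mem_Fset_vs)

lemma Fset_sep:
  assumes "x \<in> Fset (vs n)" "y \<in> Fset (vs n)" "v2 n < x" "x < y"
  shows "x + 3 \<le> y"
proof -
  have large: "\<exists>k\<le>n. z = v3 k" if "z \<in> Fset (vs n)" "v2 n < z" for z
    using that regular_upto_ordered regular_upto_le by (fastforce simp: mem_Fset_vs)
  obtain k l where "k \<le> n" "l \<le> n" "x = v3 k" "y = v3 l"
    using large[of x] large[of y] assms by force
  then show ?thesis
    using regular_upto_sep[of k l] regular_upto_sep[of l k] \<open>x < y\<close>
    by (cases k l rule: linorder_cases) auto
qed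

lemma Dset_sep:
  assumes "x \<in> Dset (vs n)" "y \<in> Dset (vs n)" "Mex (Dset (vs n)) \<le> x" "x < y"
  shows "x + 2 \<le> y"
proof -
  have large: "\<exists>k\<le>n. z = v3 k - v1 k" if "z \<in> Dset (vs n)" "Mex (Dset (vs n)) \<le> z" for z
    using that regular_upto_gaps_less_Mex by (fastforce simp: mem_Dset_vs)
  obtain k l where "k \<le> n" "l \<le> n" "x = v3 k - v1 k" "y = v3 l - v1 l"
    using large[of x] large[of y] assms by force
  then show ?thesis
    using regular_upto_sep[of k l] regular_upto_sep[of l k] \<open>x < y\<close>
    by (cases k l rule: linorder_cases) auto
qed

lemma regular_upto_step:
  obtains e where "Mex (Dset (vs n)) \<le> e" "e < Mex (Dset (vs (Suc n)))"
    "v2 (Suc n) = v1 (Suc n) + e" "v3 (Suc n) = v2 (Suc n) + Mex (Dset (vs n))"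
proof -
  define F D where "F = Fset (vs n)" and "D = Dset (vs n)"
  define a m where "a = Mex F" and "m = Mex D"
  have a: "v1 (Suc n) = a" "v1 n < a" "0 \<le> a"
    using vc_Suc(1) v1_less_Mex_Fset Mex_nonneg by (simp_all add: a_def F_def)
  have "0 \<in> F" "0 < m" using zero_mem_Fset_vs Mex_Dset_vs_pos by (simp_all add: F_def m_def D_def)
  have gaps: "v2 n - v1 n < m" "v3 n - v2 n < m"
    using regular_upto_gaps_less_Mex[of n] by (simp_all add: m_def D_def)
  obtain e where e: "m \<le> e" "e \<notin> D" "a + e \<notin> F" "m < e \<Longrightarrow> a + m \<in> F"
    "\<And>y. m < y \<Longrightarrow> y < e \<Longrightarrow> y \<in> D"
  proof (rule obtain_gap[of F "v2 n" D m a])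
    show "v2 n < a + m" using a gaps by simp
  qed (use Fset_sep Dset_sep Mex_notin[OF finite_Dset] in \<open>auto simp: F_def D_def m_def\<close>)
  have below_m: "y \<in> D" if "0 \<le> y" "y < m" for y
    using that less_Mex_imp_mem by (simp add: m_def)
  have v2: "v2 (Suc n) = a + e"
    unfolding vc_Suc(2) a(1) F_def[symmetric] D_def[symmetric]
  proof (rule Mex_shift_Un_eq)
    show "y \<in> D \<or> a + y \<in> F" if "0 < y" "y < e" for y
      using that below_m e(4,5) by (cases "y < m"; cases "y = m") auto
  qed (use \<open>0 \<in> F\<close> a e \<open>0 < m\<close> in auto)
  have v3: "v3 (Suc n) = a + e + m"
    unfolding vc_Suc(3) v2 F_def[symmetric] D_def[symmetric]
  proof (rule Mex_shift_Un_eq)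
    show "a + e + m \<notin> F"
      using Fset_le_v3 a gaps e(1) by (force simp: F_def)
    show "m \<notin> D" using Mex_notin[OF finite_Dset] by (simp add: m_def D_def)
  qed (use \<open>0 \<in> F\<close> a e \<open>0 < m\<close> below_m in auto)
  have "e < Mex (Dset (vs (Suc n)))"
  proof (rule less_MexI[OF finite_Dset])
    show "y \<in> Dset (vs (Suc n))" if "0 \<le> y" "y \<le> e" for y
      using that below_m e(5) unfolding Dset_vs_Suc a(1) v2 v3 D_def[symmetric]
      by (cases "y < m"; cases "y = m"; cases "y = e") auto
  qed (use a e \<open>0 < m\<close> in auto)
  then show ?thesis using that[of e] a(1) v2 v3 e(1) by (simp add: m_def D_def)
qed

lemma regular_upto_Suc: "regular_upto (Suc n)"
proof -
  obtain e where "Mex (Dset (vs n)) \<le> e" "e < Mex (Dset (vs (Suc n)))"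
    "v2 (Suc n) = v1 (Suc n) + e" "v3 (Suc n) = v2 (Suc n) + Mex (Dset (vs n))"
    using regular_upto_step by blast
  moreover have "v1 n < v1 (Suc n)" using v1_less_Mex_Fset vc_Suc(1) by simp
  ultimately show ?thesis
    using regular regular_upto_gaps_less_Mex[of n]
    unfolding regular_upto_def by (auto intro!: strict_mono_on_atMost_SucI)
qed

end

lemma regular_upto: "regular_upto n"
  by (induction n) (auto intro: regular_upto_0 regular_upto_Suc)

theorem corollary4:
  fixes i j n :: nat
  assumes "i \<in> {1, 2, 3}" and "j \<in> {1, 2, 3}" and "i > j"
  shows "vc i (Suc n) - vc j (Suc n) - (vc i n - vc j n) \<ge> int i - int j"
proof -
  have growth: "v2 n - v1 n < v2 (Suc n) - v1 (Suc n)" "v3 n - v2 n < v3 (Suc n) - v2 (Suc n)"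
    using regular_upto_less[OF regular_upto, of n "Suc n"] by auto
  consider "i = 2" "j = 1" | "i = 3" "j = 1" | "i = 3" "j = 2"
    using assms by auto
  then show ?thesis using growth by cases (simp_all add: vc_def v1_def v2_def v3_def)
qed

end
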